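(* $\widetilde{\mathbb{C}}=\widehat{\mathbb{C}}=\mathbb{Q}$.
   Context: Let $K$ be a field. For $r\in K$, a finite set $A(r)$ with $\{r\}\subseteq A(r)\subseteq K$ is called adequate for $r$ if every mapping $f:A(r)\to K$ satisfying (1) if $1\in A(r)$ then $f(1)=1$; (2) if $a,b\in A(r)$ and $a+b\in A(r)$ then $f(a+b)=f(a)+f(b)$; (3) if $a,b\in A(r)$ and $a\cdot b\in A(r)$ then $f(a\cdot b)=f(a)\cdot f(b)$, also satisfies $f(r)=r$. $\widetilde{K}$ denotes the set of all $r\in K$ for which some finite set adequate for $r$ exists. $\widehat{K}=\bigcap_{\sigma\in \mathrm{End}(K)}\{x\in K:\sigma(x)=x\}$, where $\mathrm{End}(K)$ is the set of all field endomorphisms of $K$. *)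

theory Defs
  imports Complex_Main
begin

definition respects_on :: "'a::field set \<Rightarrow> ('a \<Rightarrow> 'a) \<Rightarrow> bool" where
  "respects_on A f \<longleftrightarrow>
     (1 \<in> A \<longrightarrow> f 1 = 1) \<and>
     (\<forall>a\<in>A. \<forall>b\<in>A. a + b \<in> A \<longrightarrow> f (a + b) = f a + f b) \<and>
     (\<forall>a\<in>A. \<forall>b\<in>A. a * b \<in> A \<longrightarrow> f (a * b) = f a * f b)"

text \<open>A finite set A is adequate for r. Maps A -> K are represented by total
  functions K -> K; only their values on A matter.\<close>
definition adequate :: "'a::field \<Rightarrow> 'a set \<Rightarrow> bool" where
  "adequate r A \<longleftrightarrow> finite A \<and> r \<in> A \<and>
     (\<forall>f. respects_on A f \<longrightarrow> f r = r)"

definition tilde_set :: "'a::field set" where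
  "tilde_set = {r. \<exists>A. adequate r A}"

definition field_endo :: "('a::field \<Rightarrow> 'a) \<Rightarrow> bool" where
  "field_endo \<sigma> \<longleftrightarrow> \<sigma> 1 = 1 \<and> (\<forall>x y. \<sigma> (x + y) = \<sigma> x + \<sigma> y) \<and>
     (\<forall>x y. \<sigma> (x * y) = \<sigma> x * \<sigma> y)"

definition hat_set :: "'a::field set" where
  "hat_set = (\<Inter>\<sigma>\<in>{\<sigma>. field_endo \<sigma>}. {x. \<sigma> x = x})"

end

theory Submission
  imports Defs "HOL-Algebra.Algebraic_Closure_Type"
begin

text \<open>
  A rational r = a / b is adequate, witnessed by r and the integers in [-N, N]: additivity forces
  f to fix these integers, and multiplicativity then gives f r * b = f (r * b) = a.
  Adequate elements are fixed by every endomorphism, which satisfies (1)-(3) on any set.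
  Conversely, an element z of an algebraically closed field of characteristic 0 that is not
  rational is moved by some endomorphism. If z is algebraic, its minimal polynomial over the
  rationals has degree at least 2 and simple roots, so it has a root y different from z;
  otherwise put y = z + 1. The embedding of Q(z) sending z to y extends to the whole field by
  Zorn's lemma: a further element x is sent to a root of s p, where p is its minimal polynomial
  over the domain K of the partial embedding s, or, if x is transcendental over K, to x itself.
  The latter is legitimate because the values of s are kept algebraic over K, so that x is also
  transcendental over the image of s.
\<close>

section \<open>Subfields of a field type\<close>

definition is_subfield :: "'a::field set \<Rightarrow> bool" where
  "is_subfield K \<longleftrightarrow> 0 \<in> K \<and> 1 \<in> K \<and> (\<forall>a\<in>K. \<forall>b\<in>K. a + b \<in> K \<and> a * b \<in> K) \<and>
     (\<forall>a\<in>K. - a \<in> K \<and> inverse a \<in> K)"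

lemma
  assumes "is_subfield K"
  shows is_subfield_0: "0 \<in> K"
    and is_subfield_1: "1 \<in> K"
    and is_subfield_add: "a \<in> K \<Longrightarrow> b \<in> K \<Longrightarrow> a + b \<in> K"
    and is_subfield_mult: "a \<in> K \<Longrightarrow> b \<in> K \<Longrightarrow> a * b \<in> K"
    and is_subfield_uminus: "a \<in> K \<Longrightarrow> - a \<in> K"
    and is_subfield_inverse: "a \<in> K \<Longrightarrow> inverse a \<in> K"
    and is_subfield_diff: "a \<in> K \<Longrightarrow> b \<in> K \<Longrightarrow> a - b \<in> K"
    and is_subfield_divide: "a \<in> K \<Longrightarrow> b \<in> K \<Longrightarrow> a / b \<in> K"
  using assms unfolding is_subfield_def diff_conv_add_uminus divide_inverse
  by blast+

lemmas is_subfield_closed = is_subfield_0 is_subfield_1 is_subfield_add is_subfield_mult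
  is_subfield_uminus is_subfield_inverse is_subfield_diff is_subfield_divide

lemma is_subfield_sum: "is_subfield K \<Longrightarrow> (\<And>i. i \<in> S \<Longrightarrow> f i \<in> K) \<Longrightarrow> sum f S \<in> K"
  by (induction S rule: infinite_finite_induct) (simp_all add: is_subfield_closed)

lemma is_subfield_power: "is_subfield K \<Longrightarrow> a \<in> K \<Longrightarrow> a ^ n \<in> K"
  by (induction n) (simp_all add: is_subfield_closed)

lemma is_subfield_of_nat: "is_subfield K \<Longrightarrow> of_nat n \<in> K"
  by (induction n) (simp_all add: is_subfield_closed)

lemma is_subfield_Rats: "is_subfield \<rat>"
  unfolding is_subfield_def by (auto simp: Rats_inverse)

section \<open>Polynomials over a subfield\<close>

definition poly_over :: "'a::zero set \<Rightarrow> 'a poly \<Rightarrow> bool" where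
  "poly_over K p \<longleftrightarrow> (\<forall>i. coeff p i \<in> K)"

definition algebraic_over :: "'a::field set \<Rightarrow> 'a \<Rightarrow> bool" where
  "algebraic_over K x \<longleftrightarrow> (\<exists>p. poly_over K p \<and> p \<noteq> 0 \<and> poly p x = 0)"

lemma poly_over_mono: "poly_over K p \<Longrightarrow> K \<subseteq> L \<Longrightarrow> poly_over L p"
  unfolding poly_over_def by auto

lemma poly_over_coeffs: "poly_over K p \<Longrightarrow> set (coeffs p) \<subseteq> K"
  unfolding poly_over_def by (auto simp: coeffs_def)

lemma poly_over_0: "is_subfield K \<Longrightarrow> poly_over K 0"
  unfolding poly_over_def by (simp add: is_subfield_closed)

lemma poly_over_pCons: "poly_over K (pCons c p) \<longleftrightarrow> c \<in> K \<and> poly_over K p"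
  unfolding poly_over_def
proof
  show "\<forall>i. coeff (pCons c p) i \<in> K \<Longrightarrow> c \<in> K \<and> (\<forall>i. coeff p i \<in> K)"
    by (metis coeff_pCons_0 coeff_pCons_Suc)
qed (auto simp: coeff_pCons split: nat.splits)

lemma poly_over_const: "is_subfield K \<Longrightarrow> c \<in> K \<Longrightarrow> poly_over K [:c:]"
  by (simp add: poly_over_pCons poly_over_0)

lemma poly_over_1: "is_subfield K \<Longrightarrow> poly_over K 1"
  by (simp add: one_pCons poly_over_const is_subfield_closed)

lemma poly_over_add: "is_subfield K \<Longrightarrow> poly_over K p \<Longrightarrow> poly_over K q \<Longrightarrow> poly_over K (p + q)"
  unfolding poly_over_def by (simp add: is_subfield_closed)

lemma poly_over_uminus: "is_subfield K \<Longrightarrow> poly_over K p \<Longrightarrow> poly_over K (- p)"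
  unfolding poly_over_def by (simp add: is_subfield_closed)

lemma poly_over_diff: "is_subfield K \<Longrightarrow> poly_over K p \<Longrightarrow> poly_over K q \<Longrightarrow> poly_over K (p - q)"
  unfolding poly_over_def by (simp add: is_subfield_closed)

lemma poly_over_mult: "is_subfield K \<Longrightarrow> poly_over K p \<Longrightarrow> poly_over K q \<Longrightarrow> poly_over K (p * q)"
  unfolding poly_over_def coeff_mult by (simp add: is_subfield_sum is_subfield_closed)

lemma poly_over_monom: "is_subfield K \<Longrightarrow> c \<in> K \<Longrightarrow> poly_over K (monom c n)"
  unfolding poly_over_def by (simp add: coeff_monom is_subfield_closed)

lemma poly_over_pderiv: "is_subfield K \<Longrightarrow> poly_over K p \<Longrightarrow> poly_over K (pderiv p)"
  unfolding poly_over_def by (simp add: coeff_pderiv is_subfield_of_nat is_subfield_closed)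

lemma poly_in_subfield: "is_subfield K \<Longrightarrow> poly_over K p \<Longrightarrow> z \<in> K \<Longrightarrow> poly p z \<in> K"
  unfolding poly_altdef poly_over_def
  by (simp add: is_subfield_sum is_subfield_power is_subfield_closed)

lemma poly_over_division:
  assumes K: "is_subfield K" and p: "poly_over K p" "p \<noteq> 0" and q: "poly_over K q"
  shows "\<exists>u r. poly_over K u \<and> poly_over K r \<and> q = p * u + r \<and> (r = 0 \<or> degree r < degree p)"
  using q
proof (induction "degree q" arbitrary: q rule: less_induct)
  case less
  show ?case
  proof (cases "q \<noteq> 0 \<and> degree p \<le> degree q")
    case False
    then show ?thesis using less.prems poly_over_0[OF K] by (intro exI[of _ 0] exI[of _ q]) auto
  next
    case True
    define m where "m = monom (lead_coeff q / lead_coeff p) (degree q - degree p)"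
    have m: "poly_over K m"
      unfolding m_def using less.prems p(1)
      by (simp add: poly_over_monom poly_over_def is_subfield_closed K)
    have "m \<noteq> 0" using True p(2) by (simp add: m_def)
    then have deg_mp: "degree (m * p) = degree q"
      using True p(2) by (simp add: m_def degree_mult_eq degree_monom_eq)
    have "lead_coeff (m * p) = lead_coeff m * lead_coeff p" by (rule lead_coeff_mult)
    also have "\<dots> = lead_coeff q" using p(2) unfolding m_def lead_coeff_monom by simp
    finally have lc_mp: "lead_coeff (m * p) = lead_coeff q" .
    define q' where "q' = q - m * p"
    have q': "poly_over K q'"
      unfolding q'_def using poly_over_diff poly_over_mult K less.prems m p(1) by blast
    have "coeff q' (degree q) = 0" using deg_mp lc_mp by (simp add: q'_def)
    moreover have "degree q' \<le> degree q"
      unfolding q'_def by (rule degree_diff_le) (simp_all add: deg_mp)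
    ultimately have "q' = 0 \<or> degree q' < degree q" using degree_less_if_less_eqI by blast
    then obtain u r where ur: "poly_over K u" "poly_over K r" "q' = p * u + r"
        "r = 0 \<or> degree r < degree p"
      using less.hyps[OF _ q'] poly_over_0[OF K] by (metis add.right_neutral mult_zero_right)
    have "q = p * (u + m) + r" using ur(3) by (simp add: q'_def algebra_simps)
    then show ?thesis using ur poly_over_add[OF K ur(1) m] by blast
  qed
qed

section \<open>Algebraic elements\<close>

interpretation type_ring: domain "ring_of_type_algebra :: 'a::field ring"
  by (rule field.axioms(1)[OF field_from_type_algebra])

lemma ring_of_type_algebra_simps [simp]:
  "carrier ring_of_type_algebra = UNIV" "monoid.mult ring_of_type_algebra = (*)"
  "add ring_of_type_algebra = (+)" "one ring_of_type_algebra = 1" "zero ring_of_type_algebra = 0"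
  by (simp_all add: ring_of_type_algebra_def)

lemma type_ring_a_inv [simp]: "a_inv ring_of_type_algebra x = - (x :: 'a::field)"
  by (rule type_ring.minus_equality) auto

lemma type_ring_m_inv: "x \<noteq> 0 \<Longrightarrow> m_inv ring_of_type_algebra x = inverse (x :: 'a::field)"
  by (rule type_ring.comm_inv_char) auto

lemma type_ring_pow [simp]: "x [^]\<^bsub>ring_of_type_algebra\<^esub> (n::nat) = (x :: 'a::field) ^ n"
  by (induction n) auto

lemma type_ring_eval: "type_ring.eval p x = poly (Poly (rev p)) (x :: 'a::field)"
  by (induction p) (simp_all add: Poly_snoc poly_monom)

lemma is_subfield_iff_subfield: "is_subfield K \<longleftrightarrow> subfield K ring_of_type_algebra"
proof
  assume K: "is_subfield K"
  show "subfield K ring_of_type_algebra"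
  proof (rule field.subfieldI'[OF field_from_type_algebra])
    show "subring K ring_of_type_algebra"
      by (rule type_ring.subringI) (use K in \<open>auto simp: is_subfield_closed\<close>)
    show "inv\<^bsub>ring_of_type_algebra\<^esub> k \<in> K" if "k \<in> K - {\<zero>\<^bsub>ring_of_type_algebra\<^esub>}" for k
      using that K by (simp add: type_ring_m_inv is_subfield_closed)
  qed
next
  assume K: "subfield K ring_of_type_algebra"
  have "inverse a \<in> K" if "a \<in> K" for a
    using type_ring.subfield_m_inv(1)[OF K, of a] subringE(2)[OF subfieldE(1)[OF K]] that
    by (cases "a = 0") (auto simp: type_ring_m_inv)
  then show "is_subfield K" using subringE[OF subfieldE(1)[OF K]] by (auto simp: is_subfield_def)
qed

lemma algebraic_over_iff_algebraic:
  assumes K: "is_subfield K"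
  shows "algebraic_over K z \<longleftrightarrow> (type_ring.algebraic over K) z"
proof
  assume "algebraic_over K z"
  then obtain q where q: "poly_over K q" "q \<noteq> 0" "poly q z = 0" unfolding algebraic_over_def by auto
  have "rev (coeffs q) \<in> carrier (K[X]\<^bsub>ring_of_type_algebra\<^esub>)"
    using q by (auto simp: univ_poly_def polynomial_def hd_rev poly_over_coeffs
        last_coeffs_eq_coeff_degree)
  then show "(type_ring.algebraic over K) z"
    using q type_ring.algebraicI[of "rev (coeffs q)"] by (simp add: type_ring_eval)
next
  assume z: "(type_ring.algebraic over K) z"
  have "subring K ring_of_type_algebra"
    using K by (simp add: is_subfield_iff_subfield subfieldE(1))
  then obtain p where p: "p \<in> carrier (K[X]\<^bsub>ring_of_type_algebra\<^esub>)" "p \<noteq> []"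
      "type_ring.eval p z = 0"
    by (rule type_ring.algebraicE) (use z in auto)
  then have p_K: "set p \<subseteq> K" and "hd p \<noteq> 0" by (auto simp: univ_poly_def polynomial_def)
  have "coeff (Poly (rev p)) i \<in> K" for i
    using nth_mem[of i "rev p"] p_K K by (auto simp: nth_default_def is_subfield_closed)
  moreover have "coeff (Poly (rev p)) (length p - 1) = hd p"
    using p(2) by (simp add: nth_default_def hd_conv_nth rev_nth)
  ultimately show "algebraic_over K z"
    using p \<open>hd p \<noteq> 0\<close> unfolding algebraic_over_def poly_over_def
    by (metis coeff_0 type_ring_eval)
qed

lemma is_subfield_algebraic_closure:
  assumes "is_subfield K"
  shows "is_subfield {z. algebraic_over K z}"
  using field.subfield_of_algebraics[OF field_from_type_algebra, of K] assms
  by (simp add: is_subfield_iff_subfield algebraic_over_iff_algebraic)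

lemma algebraic_over_mono: "K \<subseteq> L \<Longrightarrow> algebraic_over K z \<Longrightarrow> algebraic_over L z"
  unfolding algebraic_over_def using poly_over_mono by blast

lemma algebraic_over_self: "is_subfield K \<Longrightarrow> k \<in> K \<Longrightarrow> algebraic_over K k"
  unfolding algebraic_over_def
  by (rule exI[of _ "[:- k, 1:]"]) (simp add: poly_over_pCons poly_over_0 is_subfield_closed)

lemma algebraic_over_trans:
  assumes K: "is_subfield K" and q: "poly_over {z. algebraic_over K z} q" "q \<noteq> 0" "poly q y = 0"
  shows "algebraic_over K y"
proof -
  let ?cs = "coeffs q"
  define F where "F = type_ring.finite_extension K ?cs"
  have K': "subfield K ring_of_type_algebra" using K by (simp add: is_subfield_iff_subfield)
  have cs: "set ?cs \<subseteq> carrier ring_of_type_algebra" by simp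
  have cs_alg: "(type_ring.algebraic over K) c" if "c \<in> set ?cs" for c
    using poly_over_coeffs[OF q(1)] that by (auto simp: algebraic_over_iff_algebraic[OF K])
  have F: "subfield F ring_of_type_algebra"
    unfolding F_def by (rule type_ring.finite_extension_is_subfield[OF K' cs cs_alg])
  have F_dim: "type_ring.finite_dimension K F"
    unfolding F_def by (rule type_ring.finite_extension_finite_dimension(1)[OF K' cs cs_alg])
  have cs_F: "set ?cs \<subseteq> F"
    unfolding F_def by (rule type_ring.finite_extension_mem[OF subfieldE(1)[OF K'] cs])
  have "coeff q i \<in> F" for i
  proof (cases "coeff q i = 0")
    case True
    then show ?thesis using subringE(2)[OF subfieldE(1)[OF F]] by simp
  next
    case False
    then show ?thesis using cs_F q(2) coeff_in_coeffs[of q i] le_degree[of q i] by blast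
  qed
  then have "algebraic_over F y" using q(2,3) unfolding algebraic_over_def poly_over_def by blast
  then have "(type_ring.algebraic over F) y"
    using F by (simp add: algebraic_over_iff_algebraic is_subfield_iff_subfield)
  then have "type_ring.finite_dimension F (type_ring.simple_extension F y)"
    using type_ring.finite_dimension_simple_extension[OF F] by simp
  then have "type_ring.finite_dimension K (type_ring.simple_extension F y)"
    by (rule type_ring.telescopic_base_dim(1)[OF K' F F_dim])
  then have "(type_ring.algebraic over K) y"
    using type_ring.finite_dimension_imp_algebraic[OF K'
        type_ring.simple_extension_is_subring[OF subfieldE(1)[OF F]]]
      type_ring.simple_extension_mem[OF subfieldE(1)[OF F]] by simp
  then show ?thesis using K by (simp add: algebraic_over_iff_algebraic)
qed

section \<open>Homomorphisms defined on a subfield\<close>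

definition field_hom_on :: "'a::field set \<Rightarrow> ('a \<Rightarrow> 'b::field) \<Rightarrow> bool" where
  "field_hom_on K s \<longleftrightarrow> s 1 = 1 \<and> (\<forall>a\<in>K. \<forall>b\<in>K. s (a + b) = s a + s b \<and> s (a * b) = s a * s b)"

lemma field_hom_on_1: "field_hom_on K s \<Longrightarrow> s 1 = 1"
  unfolding field_hom_on_def by auto

lemma field_hom_on_add: "field_hom_on K s \<Longrightarrow> a \<in> K \<Longrightarrow> b \<in> K \<Longrightarrow> s (a + b) = s a + s b"
  unfolding field_hom_on_def by auto

lemma field_hom_on_mult: "field_hom_on K s \<Longrightarrow> a \<in> K \<Longrightarrow> b \<in> K \<Longrightarrow> s (a * b) = s a * s b"
  unfolding field_hom_on_def by auto

lemma field_hom_on_0: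
  assumes "is_subfield K" "field_hom_on K s"
  shows "s 0 = 0"
proof -
  have "s 0 = s 0 + s 0"
    using field_hom_on_add[OF assms(2), of 0 0] is_subfield_0[OF assms(1)] by simp
  then show ?thesis by (metis add_cancel_right_right)
qed

lemma field_hom_on_uminus:
  assumes K: "is_subfield K" and s: "field_hom_on K s" and a: "a \<in> K"
  shows "s (- a) = - s a"
proof -
  have "s a + s (- a) = s (a + - a)"
    using field_hom_on_add[OF s a is_subfield_uminus[OF K a]] by simp
  also have "\<dots> = 0" using field_hom_on_0[OF K s] by simp
  finally show ?thesis by (metis neg_eq_iff_add_eq_0)
qed

lemma field_hom_on_diff:
  "is_subfield K \<Longrightarrow> field_hom_on K s \<Longrightarrow> a \<in> K \<Longrightarrow> b \<in> K \<Longrightarrow> s (a - b) = s a - s b"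
  using field_hom_on_add[of K s a "- b"] field_hom_on_uminus[of K s b]
  by (simp add: is_subfield_closed)

lemma field_hom_on_eq_0_iff:
  assumes K: "is_subfield K" and s: "field_hom_on K s" and a: "a \<in> K"
  shows "s a = 0 \<longleftrightarrow> a = 0"
proof
  assume "s a = 0"
  show "a = 0"
  proof (rule ccontr)
    assume "a \<noteq> 0"
    then have "s a * s (inverse a) = 1"
      using field_hom_on_mult[OF s a, of "inverse a"] field_hom_on_1[OF s] a K
      by (simp add: is_subfield_closed)
    then show False using \<open>s a = 0\<close> by simp
  qed
qed (simp add: field_hom_on_0[OF K s])

lemma field_hom_on_sum:
  "is_subfield K \<Longrightarrow> field_hom_on K s \<Longrightarrow> (\<And>i. i \<in> S \<Longrightarrow> f i \<in> K) \<Longrightarrow> s (sum f S) = (\<Sum>i\<in>S. s (f i))"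
  by (induction S rule: infinite_finite_induct)
    (simp_all add: field_hom_on_0 field_hom_on_add is_subfield_sum)

lemma field_hom_on_cong:
  assumes "is_subfield K" "field_hom_on K s" "\<And>k. k \<in> K \<Longrightarrow> t k = s k"
  shows "field_hom_on K t"
  using assms unfolding field_hom_on_def by (simp add: is_subfield_closed)

lemma coeff_map_poly_hom:
  "is_subfield K \<Longrightarrow> field_hom_on K s \<Longrightarrow> coeff (map_poly s q) i = s (coeff q i)"
  by (simp add: coeff_map_poly field_hom_on_0)

context
  fixes K :: "'a::field set" and s :: "'a \<Rightarrow> 'b::field"
  assumes K: "is_subfield K" and s: "field_hom_on K s"
begin

lemma map_poly_hom_add:
  "poly_over K p \<Longrightarrow> poly_over K q \<Longrightarrow> map_poly s (p + q) = map_poly s p + map_poly s q"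
  by (rule poly_eqI) (simp add: coeff_map_poly_hom[OF K s] field_hom_on_add[OF s] poly_over_def)

lemma map_poly_hom_diff:
  "poly_over K p \<Longrightarrow> poly_over K q \<Longrightarrow> map_poly s (p - q) = map_poly s p - map_poly s q"
  by (rule poly_eqI) (simp add: coeff_map_poly_hom[OF K s] field_hom_on_diff[OF K s] poly_over_def)

lemma map_poly_hom_mult:
  "poly_over K p \<Longrightarrow> poly_over K q \<Longrightarrow> map_poly s (p * q) = map_poly s p * map_poly s q"
  by (rule poly_eqI)
    (simp add: coeff_map_poly_hom[OF K s] coeff_mult field_hom_on_sum[OF K s]
      field_hom_on_mult[OF s] poly_over_def is_subfield_closed[OF K])

lemma map_poly_hom_const: "map_poly s [:c:] = [:s c:]"
  by (rule poly_eqI)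
    (simp add: coeff_map_poly_hom[OF K s] coeff_pCons field_hom_on_0[OF K s] split: nat.splits)

lemma map_poly_hom_X: "map_poly s [:0, 1:] = [:0, 1:]"
  by (simp add: map_poly_pCons field_hom_on_0[OF K s] field_hom_on_1[OF s])

lemma map_poly_hom_eq_0_iff: "poly_over K q \<Longrightarrow> map_poly s q = 0 \<longleftrightarrow> q = 0"
  by (auto simp: poly_eq_iff coeff_map_poly_hom[OF K s] field_hom_on_eq_0_iff[OF K s] poly_over_def)

lemma degree_map_poly_hom: "poly_over K q \<Longrightarrow> degree (map_poly s q) = degree q"
  by (cases "q = 0")
    (simp_all add: map_poly_degree_eq field_hom_on_eq_0_iff[OF K s] poly_over_def)

lemma poly_over_map_poly_hom: "s ` K \<subseteq> F \<Longrightarrow> poly_over K q \<Longrightarrow> poly_over F (map_poly s q)"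
  unfolding poly_over_def by (auto simp: coeff_map_poly_hom[OF K s])

end

section \<open>Minimal polynomials and conjugates\<close>

definition is_minimal_poly :: "'a::field set \<Rightarrow> 'a \<Rightarrow> 'a poly \<Rightarrow> bool" where
  "is_minimal_poly K x p \<longleftrightarrow> poly_over K p \<and> p \<noteq> 0 \<and> poly p x = 0 \<and>
     (\<forall>q. poly_over K q \<and> q \<noteq> 0 \<and> poly q x = 0 \<longrightarrow> degree p \<le> degree q)"

lemma minimal_poly_exists:
  assumes "algebraic_over K x"
  shows "\<exists>p. is_minimal_poly K x p"
proof -
  obtain p0 where "poly_over K p0 \<and> p0 \<noteq> 0 \<and> poly p0 x = 0"
    using assms unfolding algebraic_over_def by blast
  from ex_has_least_nat[of "\<lambda>q. poly_over K q \<and> q \<noteq> 0 \<and> poly q x = 0", OF this]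
  show ?thesis unfolding is_minimal_poly_def by blast
qed

lemma is_minimal_poly_degree:
  assumes "is_minimal_poly K x p"
  shows "degree p \<noteq> 0"
proof
  assume "degree p = 0"
  then obtain c where "p = [:c:]" by (rule degree_eq_zeroE)
  then show False using assms unfolding is_minimal_poly_def by simp
qed

lemma poly_over_kernel_principal:
  fixes E :: "'a::field poly \<Rightarrow> 'b::comm_ring"
  assumes K: "is_subfield K"
    and E_add: "\<And>a b. poly_over K a \<Longrightarrow> poly_over K b \<Longrightarrow> E (a + b) = E a + E b"
    and E_mult: "\<And>a b. poly_over K a \<Longrightarrow> poly_over K b \<Longrightarrow> E (a * b) = E a * E b"
    and t: "poly_over K t" "t \<noteq> 0" "E t = 0"
    and t_min: "\<And>a. poly_over K a \<Longrightarrow> a \<noteq> 0 \<Longrightarrow> E a = 0 \<Longrightarrow> degree t \<le> degree a"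
    and a: "poly_over K a" "E a = 0"
  shows "\<exists>u. poly_over K u \<and> a = t * u"
proof -
  obtain u r where ur: "poly_over K u" "poly_over K r" "a = t * u + r" "r = 0 \<or> degree r < degree t"
    using poly_over_division[OF K t(1,2) a(1)] by blast
  have "E a = E t * E u + E r"
    using ur E_add E_mult poly_over_mult[OF K t(1) ur(1)] t(1) by simp
  then have "E r = 0" using a(2) t(3) by simp
  have "r = 0"
  proof (rule ccontr)
    assume "r \<noteq> 0"
    then have "degree t \<le> degree r" using t_min ur(2) \<open>E r = 0\<close> by blast
    then show False using ur(4) \<open>r \<noteq> 0\<close> by simp
  qed
  then show ?thesis using ur by auto
qed

lemma minimal_poly_dvd:
  assumes K: "is_subfield K" and p: "is_minimal_poly K x p" and q: "poly_over K q" "poly q x = 0"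
  shows "\<exists>u. poly_over K u \<and> q = p * u"
  by (rule poly_over_kernel_principal[where E = "\<lambda>a. poly a x", OF K])
    (use p q in \<open>simp_all add: is_minimal_poly_def\<close>)

text \<open>Exactly the condition under which x \<mapsto> y extends s to a homomorphism on K(x).\<close>
definition conjugate_over :: "'a::field set \<Rightarrow> ('a \<Rightarrow> 'b::field) \<Rightarrow> 'a \<Rightarrow> 'b \<Rightarrow> bool" where
  "conjugate_over K s x y \<longleftrightarrow> (\<forall>q. poly_over K q \<longrightarrow> (poly q x = 0 \<longleftrightarrow> poly (map_poly s q) y = 0))"

lemma conjugate_over_cong:
  "(\<And>k. k \<in> K \<Longrightarrow> t k = s k) \<Longrightarrow> conjugate_over K t x y \<longleftrightarrow> conjugate_over K s x y"
proof -
  assume "\<And>k. k \<in> K \<Longrightarrow> t k = s k"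
  then have "map_poly t q = map_poly s q" if "poly_over K q" for q
    using poly_over_coeffs[OF that] by (intro map_poly_cong) blast
  then show ?thesis unfolding conjugate_over_def by auto
qed

lemma conjugate_over_minimal_poly_root:
  assumes K: "is_subfield K" and s: "field_hom_on K s"
    and p: "is_minimal_poly K x p" and y: "poly (map_poly s p) y = 0"
  shows "conjugate_over K s x y"
proof -
  define E where "E a = poly (map_poly s a) y" for a
  have E_add: "E (a + b) = E a + E b" and E_mult: "E (a * b) = E a * E b"
    if "poly_over K a" "poly_over K b" for a b
    using that by (simp_all add: E_def map_poly_hom_add[OF K s] map_poly_hom_mult[OF K s])
  have p_over: "poly_over K p" "p \<noteq> 0" "poly p x = 0"
    and p_min: "\<And>q. poly_over K q \<Longrightarrow> q \<noteq> 0 \<Longrightarrow> poly q x = 0 \<Longrightarrow> degree p \<le> degree q"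
    using p unfolding is_minimal_poly_def by auto
  have "poly_over K p \<and> p \<noteq> 0 \<and> E p = 0" using p_over y by (simp add: E_def)
  from ex_has_least_nat[of "\<lambda>a. poly_over K a \<and> a \<noteq> 0 \<and> E a = 0", OF this]
  obtain t where t: "poly_over K t" "t \<noteq> 0" "E t = 0"
    and t_min: "\<And>a. poly_over K a \<Longrightarrow> a \<noteq> 0 \<Longrightarrow> E a = 0 \<Longrightarrow> degree t \<le> degree a"
    by blast
  have t_dvd: "\<exists>u. poly_over K u \<and> q = t * u" if "poly_over K q" "E q = 0" for q
    by (rule poly_over_kernel_principal[OF K E_add E_mult t t_min that])
  have "poly t x = 0"
  proof (rule ccontr)
    assume tx: "poly t x \<noteq> 0"
    obtain u where u: "poly_over K u" "p = t * u" using t_dvd p_over y unfolding E_def by blast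
    then have "u \<noteq> 0" "poly u x = 0" using p_over tx by auto
    then have "degree p \<le> degree u" using p_min u(1) by blast
    then have "degree t = 0" using u(2) t(2) \<open>u \<noteq> 0\<close> by (simp add: degree_mult_eq)
    then obtain c where c: "t = [:c:]" by (rule degree_eq_zeroE)
    then have "c \<in> K" "c \<noteq> 0" using t(1,2) by (auto simp: poly_over_pCons)
    then show False
      using t(3) c by (simp add: E_def map_poly_hom_const[OF K s] field_hom_on_eq_0_iff[OF K s])
  qed
  show ?thesis unfolding conjugate_over_def
  proof (intro allI impI iffI)
    fix q assume "poly_over K q" "poly q x = 0"
    then obtain u where "poly_over K u" "q = p * u" using minimal_poly_dvd[OF K p] by blast
    then show "poly (map_poly s q) y = 0" using E_mult[OF p_over(1)] y unfolding E_def by simp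
  next
    fix q assume "poly_over K q" "poly (map_poly s q) y = 0"
    then obtain u where "q = t * u" using t_dvd unfolding E_def by blast
    then show "poly q x = 0" using \<open>poly t x = 0\<close> by simp
  qed
qed

lemma conjugate_over_transcendental:
  assumes K: "is_subfield K" and s: "field_hom_on K s"
    and s_alg: "s ` K \<subseteq> {z. algebraic_over K z}" and x: "\<not> algebraic_over K x"
  shows "conjugate_over K s x x"
  unfolding conjugate_over_def
proof (intro allI impI)
  fix q assume q: "poly_over K q"
  have "map_poly s q = 0" if "poly (map_poly s q) x = 0"
    using algebraic_over_trans[OF K poly_over_map_poly_hom[OF K s s_alg q]] that x by blast
  moreover have "q = 0" if "poly q x = 0"
    using q that x unfolding algebraic_over_def by blast
  ultimately show "poly q x = 0 \<longleftrightarrow> poly (map_poly s q) x = 0"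
    using map_poly_hom_eq_0_iff[OF K s q] by auto
qed

section \<open>Adjoining one element\<close>

definition adjoin :: "'a::field set \<Rightarrow> 'a \<Rightarrow> 'a set" where
  "adjoin K x = {poly a x / poly b x | a b. poly_over K a \<and> poly_over K b \<and> poly b x \<noteq> 0}"

lemma adjoinI: "poly_over K a \<Longrightarrow> poly_over K b \<Longrightarrow> poly b x \<noteq> 0 \<Longrightarrow> poly a x / poly b x \<in> adjoin K x"
  unfolding adjoin_def by blast

lemma adjoinE:
  assumes "v \<in> adjoin K x"
  obtains a b where "poly_over K a" "poly_over K b" "poly b x \<noteq> 0" "v = poly a x / poly b x"
  using assms unfolding adjoin_def by blast

lemma subset_adjoin:
  assumes "is_subfield K"
  shows "K \<subseteq> adjoin K x"
proof
  fix k assume "k \<in> K"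
  then have "poly [:k:] x / poly 1 x \<in> adjoin K x"
    using assms by (intro adjoinI) (simp_all add: poly_over_const poly_over_1)
  then show "k \<in> adjoin K x" by simp
qed

lemma adjoin_self: "is_subfield K \<Longrightarrow> x \<in> adjoin K x"
  using adjoinI[of K "[:0, 1:]" 1 x]
  by (simp add: poly_over_pCons poly_over_0 poly_over_1 is_subfield_closed)

lemma is_subfield_adjoin:
  assumes K: "is_subfield K"
  shows "is_subfield (adjoin K x)"
  unfolding is_subfield_def
proof (intro conjI ballI)
  show "0 \<in> adjoin K x" "1 \<in> adjoin K x"
    using subset_adjoin[OF K] is_subfield_0[OF K] is_subfield_1[OF K] by auto
next
  fix v w assume "v \<in> adjoin K x" "w \<in> adjoin K x"
  then obtain a b c d
    where ab: "poly_over K a" "poly_over K b" "poly b x \<noteq> 0" "v = poly a x / poly b x"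
      and cd: "poly_over K c" "poly_over K d" "poly d x \<noteq> 0" "w = poly c x / poly d x"
    by (metis adjoinE)
  have "v + w = poly (a * d + c * b) x / poly (b * d) x" using ab cd by (simp add: add_frac_eq)
  also have "\<dots> \<in> adjoin K x"
    by (rule adjoinI) (use ab cd K in \<open>simp_all add: poly_over_add poly_over_mult\<close>)
  finally show "v + w \<in> adjoin K x" .
  have "v * w = poly (a * c) x / poly (b * d) x" using ab cd by simp
  also have "\<dots> \<in> adjoin K x"
    by (rule adjoinI) (use ab cd K in \<open>simp_all add: poly_over_mult\<close>)
  finally show "v * w \<in> adjoin K x" .
next
  fix v assume "v \<in> adjoin K x"
  then obtain a b where ab: "poly_over K a" "poly_over K b" "poly b x \<noteq> 0" "v = poly a x / poly b x"
    by (rule adjoinE)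
  have "- v = poly (- a) x / poly b x" using ab by simp
  also have "\<dots> \<in> adjoin K x" by (rule adjoinI) (use ab K in \<open>simp_all add: poly_over_uminus\<close>)
  finally show "- v \<in> adjoin K x" .
  show "inverse v \<in> adjoin K x"
  proof (cases "poly a x = 0")
    case True
    then show ?thesis using ab subset_adjoin[OF K] is_subfield_0[OF K] by auto
  next
    case False
    have "inverse v = poly b x / poly a x" using ab by simp
    also have "\<dots> \<in> adjoin K x" by (rule adjoinI) (use ab False in auto)
    finally show ?thesis .
  qed
qed

definition extend_hom :: "'a::field set \<Rightarrow> ('a \<Rightarrow> 'b::field) \<Rightarrow> 'a \<Rightarrow> 'b \<Rightarrow> 'a \<Rightarrow> 'b" where
  "extend_hom K s x y v = (SOME w. \<exists>a b. poly_over K a \<and> poly_over K b \<and> poly b x \<noteq> 0 \<and>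
     v = poly a x / poly b x \<and> w = poly (map_poly s a) y / poly (map_poly s b) y)"

context
  fixes K :: "'a::field set" and s :: "'a \<Rightarrow> 'b::field" and x :: 'a and y :: 'b
  assumes K: "is_subfield K" and s: "field_hom_on K s" and xy: "conjugate_over K s x y"
begin

lemma poly_map_poly_hom_nonzero: "poly_over K b \<Longrightarrow> poly b x \<noteq> 0 \<Longrightarrow> poly (map_poly s b) y \<noteq> 0"
  using xy unfolding conjugate_over_def by blast

lemma extend_hom_frac:
  assumes ab: "poly_over K a" "poly_over K b" "poly b x \<noteq> 0"
  shows "extend_hom K s x y (poly a x / poly b x) = poly (map_poly s a) y / poly (map_poly s b) y"
proof -
  define E where "E q = poly (map_poly s q) y" for q
  have E_nonzero: "E b \<noteq> 0" using poly_map_poly_hom_nonzero ab by (simp add: E_def)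
  have unique: "E c / E d = E a / E b"
    if cd: "poly_over K c" "poly_over K d" "poly d x \<noteq> 0"
      "poly a x / poly b x = poly c x / poly d x"
    for c d
  proof -
    have over: "poly_over K (a * d - c * b)"
      using ab cd K by (simp add: poly_over_diff poly_over_mult)
    have "poly (a * d - c * b) x = 0" using ab(3) cd(3,4) by (simp add: frac_eq_eq)
    then have "E (a * d - c * b) = 0" using xy over unfolding conjugate_over_def E_def by blast
    then have "E a * E d = E c * E b"
      using ab cd K
      by (simp add: E_def map_poly_hom_diff[OF K s] map_poly_hom_mult[OF K s] poly_over_mult)
    moreover have "E d \<noteq> 0" using poly_map_poly_hom_nonzero cd by (simp add: E_def)
    ultimately show ?thesis using E_nonzero by (simp add: frac_eq_eq)
  qed
  show ?thesis
    unfolding extend_hom_def E_def[symmetric]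
    by (rule someI2[where a = "E a / E b"]) (use ab unique in blast)+
qed

lemma extend_hom_eq: "k \<in> K \<Longrightarrow> extend_hom K s x y k = s k"
  using extend_hom_frac[of "[:k:]" 1] K
  by (simp add: poly_over_const poly_over_1 map_poly_hom_const[OF K s] field_hom_on_1[OF s])

lemma extend_hom_self: "extend_hom K s x y x = y"
  using extend_hom_frac[of "[:0, 1:]" 1] K
  by (simp add: poly_over_pCons poly_over_0 poly_over_1 is_subfield_closed map_poly_hom_X[OF K s]
      field_hom_on_1[OF s])

lemma field_hom_on_extend_hom: "field_hom_on (adjoin K x) (extend_hom K s x y)"
  unfolding field_hom_on_def
proof (intro conjI ballI)
  show "extend_hom K s x y 1 = 1"
    using extend_hom_eq field_hom_on_1[OF s] is_subfield_1[OF K] by simp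
next
  fix v w assume "v \<in> adjoin K x" "w \<in> adjoin K x"
  then obtain a b c d
    where ab: "poly_over K a" "poly_over K b" "poly b x \<noteq> 0" "v = poly a x / poly b x"
      and cd: "poly_over K c" "poly_over K d" "poly d x \<noteq> 0" "w = poly c x / poly d x"
    by (metis adjoinE)
  define E where "E q = poly (map_poly s q) y" for q
  have t_frac: "extend_hom K s x y (poly p x / poly q x) = E p / E q"
    if "poly_over K p" "poly_over K q" "poly q x \<noteq> 0" for p q
    using extend_hom_frac[OF that] by (simp add: E_def)
  have E_add: "E (p + q) = E p + E q" and E_mult: "E (p * q) = E p * E q"
    if "poly_over K p" "poly_over K q" for p q
    using that by (simp_all add: E_def map_poly_hom_add[OF K s] map_poly_hom_mult[OF K s])
  have E_nonzero: "E b \<noteq> 0" "E d \<noteq> 0"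
    using poly_map_poly_hom_nonzero ab cd by (simp_all add: E_def)
  have over: "poly_over K (a * d)" "poly_over K (c * b)" "poly_over K (a * d + c * b)"
    "poly_over K (b * d)" "poly_over K (a * c)"
    using ab cd K by (simp_all add: poly_over_add poly_over_mult)
  have bd: "poly (b * d) x \<noteq> 0" using ab cd by simp
  have "extend_hom K s x y (v + w) = extend_hom K s x y (poly (a * d + c * b) x / poly (b * d) x)"
    using ab cd by (simp add: add_frac_eq)
  also have "\<dots> = E (a * d + c * b) / E (b * d)" by (rule t_frac[OF over(3,4) bd])
  also have "\<dots> = E a / E b + E c / E d"
    using E_nonzero by (simp add: E_add[OF over(1,2)] E_mult ab cd add_frac_eq)
  also have "\<dots> = extend_hom K s x y v + extend_hom K s x y w" using t_frac ab cd by simp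
  finally show "extend_hom K s x y (v + w) = extend_hom K s x y v + extend_hom K s x y w" .
  have "extend_hom K s x y (v * w) = extend_hom K s x y (poly (a * c) x / poly (b * d) x)"
    using ab cd by simp
  also have "\<dots> = E (a * c) / E (b * d)" by (rule t_frac[OF over(5,4) bd])
  also have "\<dots> = (E a / E b) * (E c / E d)" by (simp add: E_mult ab cd)
  also have "\<dots> = extend_hom K s x y v * extend_hom K s x y w" using t_frac ab cd by simp
  finally show "extend_hom K s x y (v * w) = extend_hom K s x y v * extend_hom K s x y w" .
qed

lemma extend_hom_image:
  assumes F: "is_subfield F" and s_F: "s ` K \<subseteq> F" and y_F: "y \<in> F"
  shows "extend_hom K s x y ` adjoin K x \<subseteq> F"
proof
  fix w assume "w \<in> extend_hom K s x y ` adjoin K x"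
  then obtain a b where ab: "poly_over K a" "poly_over K b" "poly b x \<noteq> 0"
    and w: "w = extend_hom K s x y (poly a x / poly b x)"
    by (metis adjoinE imageE)
  have "poly (map_poly s a) y \<in> F" "poly (map_poly s b) y \<in> F"
    using poly_in_subfield[OF F poly_over_map_poly_hom[OF K s s_F] y_F] ab by auto
  then show "w \<in> F" using w extend_hom_frac[OF ab] is_subfield_divide[OF F] by simp
qed

end

section \<open>Extension to the whole field by Zorn's lemma\<close>

definition graph_on :: "'a set \<Rightarrow> ('a \<Rightarrow> 'b) \<Rightarrow> ('a \<times> 'b) set" where
  "graph_on K t = (\<lambda>k. (k, t k)) ` K"

definition graph_fun :: "('a \<times> 'b) set \<Rightarrow> 'a \<Rightarrow> 'b" where
  "graph_fun G k = (SOME v. (k, v) \<in> G)"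

lemma graph_fun_eq: "single_valued G \<Longrightarrow> (k, v) \<in> G \<Longrightarrow> graph_fun G k = v"
  unfolding single_valued_def graph_fun_def by (blast intro: someI2)

lemma graph_fun_mem: "k \<in> Domain G \<Longrightarrow> (k, graph_fun G k) \<in> G"
  unfolding graph_fun_def by (metis DomainE someI)

lemma Domain_graph_on: "Domain (graph_on K t) = K"
  unfolding graph_on_def by force

lemma single_valued_graph_on: "single_valued (graph_on K t)"
  unfolding graph_on_def single_valued_def by auto

lemma graph_fun_graph_on: "k \<in> K \<Longrightarrow> graph_fun (graph_on K t) k = t k"
  by (rule graph_fun_eq[OF single_valued_graph_on]) (simp add: graph_on_def)

text \<open>Requiring the values to be algebraic over the domain is what allows an element transcendental
  over the domain to be sent to itself.\<close>
definition admissible :: "('a::field \<times> 'a) set \<Rightarrow> bool" where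
  "admissible G \<longleftrightarrow> single_valued G \<and> is_subfield (Domain G) \<and> field_hom_on (Domain G) (graph_fun G) \<and>
     (\<forall>k\<in>Domain G. algebraic_over (Domain G) (graph_fun G k))"

lemma admissible_graph_on:
  assumes K: "is_subfield K" and t: "field_hom_on K t"
    and t_alg: "\<And>k. k \<in> K \<Longrightarrow> algebraic_over K (t k)"
  shows "admissible (graph_on K t)"
proof -
  have "field_hom_on K (graph_fun (graph_on K t))"
    by (rule field_hom_on_cong[OF K t]) (rule graph_fun_graph_on)
  moreover have "algebraic_over K (graph_fun (graph_on K t) k)" if "k \<in> K" for k
    using t_alg that by (simp add: graph_fun_graph_on)
  ultimately show ?thesis
    unfolding admissible_def Domain_graph_on using single_valued_graph_on K by blast
qed

lemma admissible_extend:
  assumes G: "admissible G" and xy: "conjugate_over (Domain G) (graph_fun G) x y"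
    and y: "algebraic_over (adjoin (Domain G) x) y"
  shows "\<exists>G'. admissible G' \<and> G \<subseteq> G' \<and> (x, y) \<in> G'"
proof -
  let ?K = "Domain G" and ?s = "graph_fun G"
  let ?L = "adjoin ?K x" and ?t = "extend_hom ?K (graph_fun G) x y"
  have K: "is_subfield ?K" and s: "field_hom_on ?K ?s"
    and s_alg: "\<And>k. k \<in> ?K \<Longrightarrow> algebraic_over ?K (?s k)"
    using G unfolding admissible_def by auto
  have L: "is_subfield ?L" by (rule is_subfield_adjoin[OF K])
  have "?t ` ?L \<subseteq> {z. algebraic_over ?L z}"
  proof (rule extend_hom_image[OF K s xy is_subfield_algebraic_closure[OF L]])
    show "?s ` ?K \<subseteq> {z. algebraic_over ?L z}"
      using s_alg algebraic_over_mono[OF subset_adjoin[OF K]] by blast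
  qed (use y in simp)
  then have "admissible (graph_on ?L ?t)"
    using admissible_graph_on[OF L field_hom_on_extend_hom[OF K s xy]] by blast
  moreover have "G \<subseteq> graph_on ?L ?t"
  proof
    fix kv assume kv: "kv \<in> G"
    then obtain k where "kv = (k, ?s k)" "k \<in> ?K"
      using G graph_fun_eq unfolding admissible_def by (metis Domain.DomainI surj_pair)
    then have "kv = (k, ?t k)" "k \<in> ?L"
      using extend_hom_eq[OF K s xy] subset_adjoin[OF K, of x] by auto
    then show "kv \<in> graph_on ?L ?t" unfolding graph_on_def by blast
  qed
  moreover have "(x, y) \<in> graph_on ?L ?t"
    using adjoin_self[OF K] extend_hom_self[OF K s xy] unfolding graph_on_def by force
  ultimately show ?thesis by blast
qed

lemma chain_subset_common_upper:
  assumes "chain\<^sub>\<subseteq> C" "A \<in> C" "B \<in> C"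
  shows "\<exists>D\<in>C. A \<subseteq> D \<and> B \<subseteq> D"
proof -
  have "A \<subseteq> B \<or> B \<subseteq> A" using assms unfolding chain_subset_def by simp
  then show ?thesis
  proof
    assume "A \<subseteq> B"
    then show ?thesis using assms(3) by (intro bexI[of _ B]) auto
  next
    assume "B \<subseteq> A"
    then show ?thesis using assms(2) by (intro bexI[of _ A]) auto
  qed
qed

lemma is_subfield_chain_Union:
  assumes C: "C \<noteq> {}" "chain\<^sub>\<subseteq> C" and sub: "\<And>K. K \<in> C \<Longrightarrow> is_subfield K"
  shows "is_subfield (\<Union>C)"
  unfolding is_subfield_def
proof (intro conjI ballI)
  obtain K where "K \<in> C" using C(1) by blast
  then show "0 \<in> \<Union>C" "1 \<in> \<Union>C" using is_subfield_0[OF sub] is_subfield_1[OF sub] by blast+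
next
  fix a b assume "a \<in> \<Union>C" "b \<in> \<Union>C"
  then obtain A B where "A \<in> C" "a \<in> A" "B \<in> C" "b \<in> B" by blast
  then obtain K where K: "K \<in> C" "a \<in> K" "b \<in> K"
    using chain_subset_common_upper[OF C(2)] by blast
  show "a + b \<in> \<Union>C" "a * b \<in> \<Union>C"
    using is_subfield_add[OF sub K(2,3)] is_subfield_mult[OF sub K(2,3)] K(1) by blast+
next
  fix a assume "a \<in> \<Union>C"
  then obtain K where "K \<in> C" "a \<in> K" by blast
  then show "- a \<in> \<Union>C" "inverse a \<in> \<Union>C"
    using is_subfield_uminus[OF sub] is_subfield_inverse[OF sub] by blast+
qed

lemma single_valued_chain_Union:
  assumes "chain\<^sub>\<subseteq> C" "\<And>G. G \<in> C \<Longrightarrow> single_valued G"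
  shows "single_valued (\<Union>C)"
  unfolding single_valued_def
proof (intro allI impI)
  fix k v w assume "(k, v) \<in> \<Union>C" "(k, w) \<in> \<Union>C"
  then obtain A B where "A \<in> C" "(k, v) \<in> A" "B \<in> C" "(k, w) \<in> B" by blast
  then obtain G where "G \<in> C" "(k, v) \<in> G" "(k, w) \<in> G"
    using chain_subset_common_upper[OF assms(1)] by blast
  then show "v = w" using assms(2) unfolding single_valued_def by blast
qed

lemma admissible_chain_Union:
  assumes C: "C \<noteq> {}" "chain\<^sub>\<subseteq> C" and adm: "\<And>G. G \<in> C \<Longrightarrow> admissible G"
  shows "admissible (\<Union>C)"
proof -
  have sub: "is_subfield (Domain G)" and hom: "field_hom_on (Domain G) (graph_fun G)"
    and alg: "\<And>k. k \<in> Domain G \<Longrightarrow> algebraic_over (Domain G) (graph_fun G k)"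
    and sv: "single_valued G"
    if "G \<in> C" for G
    using adm[OF that] unfolding admissible_def by auto
  have sv_Union: "single_valued (\<Union>C)" by (rule single_valued_chain_Union[OF C(2) sv])
  have fun_eq: "graph_fun (\<Union>C) k = graph_fun G k" if "G \<in> C" "k \<in> Domain G" for G k
    using graph_fun_eq[OF sv_Union] graph_fun_mem[OF that(2)] that(1) by blast
  have Domain_chain: "chain\<^sub>\<subseteq> (Domain ` C)"
    using C(2) unfolding chain_subset_def by (blast dest: Domain_mono)
  have Domain_le: "Domain G \<subseteq> Domain (\<Union>C)" if "G \<in> C" for G using that by blast
  have common: "\<exists>G\<in>C. a \<in> Domain G \<and> b \<in> Domain G"
    if ab: "a \<in> Domain (\<Union>C)" "b \<in> Domain (\<Union>C)" for a b
  proof -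
    obtain A B where "A \<in> C" "a \<in> Domain A" "B \<in> C" "b \<in> Domain B" using ab by blast
    moreover obtain G where "G \<in> C" "A \<subseteq> G" "B \<subseteq> G"
      using chain_subset_common_upper[OF C(2) \<open>A \<in> C\<close> \<open>B \<in> C\<close>] by blast
    ultimately show ?thesis by blast
  qed
  have "is_subfield (\<Union>(Domain ` C))"
    using C(1) sub by (intro is_subfield_chain_Union[OF _ Domain_chain]) auto
  then have "is_subfield (Domain (\<Union>C))" by (simp only: Domain_Union)
  moreover have "field_hom_on (Domain (\<Union>C)) (graph_fun (\<Union>C))"
    unfolding field_hom_on_def
  proof (intro conjI ballI)
    obtain G0 where G0: "G0 \<in> C" using C(1) by blast
    then show "graph_fun (\<Union>C) 1 = 1"
      using fun_eq[OF G0] field_hom_on_1[OF hom[OF G0]] is_subfield_1[OF sub[OF G0]] by simp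
  next
    fix a b assume "a \<in> Domain (\<Union>C)" "b \<in> Domain (\<Union>C)"
    then obtain G where G: "G \<in> C" "a \<in> Domain G" "b \<in> Domain G" using common by blast
    have "a + b \<in> Domain G" "a * b \<in> Domain G"
      using is_subfield_add[OF sub[OF G(1)] G(2,3)] is_subfield_mult[OF sub[OF G(1)] G(2,3)]
      by auto
    then show "graph_fun (\<Union>C) (a + b) = graph_fun (\<Union>C) a + graph_fun (\<Union>C) b"
      "graph_fun (\<Union>C) (a * b) = graph_fun (\<Union>C) a * graph_fun (\<Union>C) b"
      using fun_eq[OF G(1)] G(2,3) field_hom_on_add[OF hom[OF G(1)] G(2,3)]
        field_hom_on_mult[OF hom[OF G(1)] G(2,3)] by simp_all
  qed
  moreover have "algebraic_over (Domain (\<Union>C)) (graph_fun (\<Union>C) k)"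
    if k: "k \<in> Domain (\<Union>C)" for k
  proof -
    obtain G where G: "G \<in> C" "k \<in> Domain G" using k by blast
    then show ?thesis
      using alg[OF G] fun_eq[OF G] algebraic_over_mono[OF Domain_le[OF G(1)]] by simp
  qed
  ultimately show ?thesis using sv_Union unfolding admissible_def by blast
qed

lemma admissible_maximal_extension:
  assumes G0: "admissible G0"
  shows "\<exists>M. admissible M \<and> G0 \<subseteq> M \<and> (\<forall>G. admissible G \<longrightarrow> M \<subseteq> G \<longrightarrow> G = M)"
proof -
  define \<A> where "\<A> = {G. admissible G \<and> G0 \<subseteq> G}"
  have "\<forall>C\<in>chains \<A>. \<exists>U\<in>\<A>. \<forall>G\<in>C. G \<subseteq> U"
  proof
    fix C assume C: "C \<in> chains \<A>"
    show "\<exists>U\<in>\<A>. \<forall>G\<in>C. G \<subseteq> U"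
    proof (cases "C = {}")
      case True
      have "G0 \<in> \<A>" using G0 unfolding \<A>_def by simp
      then show ?thesis using True by blast
    next
      case False
      have C_\<A>: "C \<subseteq> \<A>" and chain: "chain\<^sub>\<subseteq> C" using C unfolding chains_def by auto
      have "admissible (\<Union>C)"
        by (rule admissible_chain_Union[OF False chain]) (use C_\<A> in \<open>auto simp: \<A>_def\<close>)
      moreover have "G0 \<subseteq> \<Union>C" using False C_\<A> unfolding \<A>_def by blast
      ultimately have "\<Union>C \<in> \<A>" unfolding \<A>_def by simp
      then show ?thesis by blast
    qed
  qed
  from Zorn_Lemma2[OF this] obtain M where "M \<in> \<A>" "\<forall>G\<in>\<A>. M \<subseteq> G \<longrightarrow> G = M"
    by blast
  then show ?thesis unfolding \<A>_def by blast
qed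

context
  assumes roots: "\<And>p :: 'a::field poly. degree p \<noteq> 0 \<Longrightarrow> \<exists>z. poly p z = 0"
begin

lemma admissible_enlarge:
  assumes G: "admissible (G :: ('a \<times> 'a) set)"
  shows "\<exists>G'. admissible G' \<and> G \<subseteq> G' \<and> x \<in> Domain G'"
proof -
  let ?K = "Domain G" and ?s = "graph_fun G"
  have K: "is_subfield ?K" and s: "field_hom_on ?K ?s"
    and s_alg: "?s ` ?K \<subseteq> {z. algebraic_over ?K z}"
    using G unfolding admissible_def by auto
  show ?thesis
  proof (cases "algebraic_over ?K x")
    case True
    then obtain p where p: "is_minimal_poly ?K x p" using minimal_poly_exists by blast
    then have p_over: "poly_over ?K p" "p \<noteq> 0" unfolding is_minimal_poly_def by auto
    have "degree (map_poly ?s p) \<noteq> 0"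
      using is_minimal_poly_degree[OF p] degree_map_poly_hom[OF K s p_over(1)] by simp
    then obtain y where y: "poly (map_poly ?s p) y = 0" using roots by blast
    have "map_poly ?s p \<noteq> 0" using map_poly_hom_eq_0_iff[OF K s p_over(1)] p_over(2) by simp
    then have "algebraic_over ?K y"
      using algebraic_over_trans[OF K poly_over_map_poly_hom[OF K s s_alg p_over(1)] _ y] by blast
    then show ?thesis
      using admissible_extend[OF G conjugate_over_minimal_poly_root[OF K s p y]]
        algebraic_over_mono[OF subset_adjoin[OF K]] by blast
  next
    case False
    show ?thesis
      using admissible_extend[OF G conjugate_over_transcendental[OF K s s_alg False]]
        algebraic_over_self[OF is_subfield_adjoin[OF K] adjoin_self[OF K]] by blast
  qed
qed

lemma admissible_extends_to_endo:
  assumes G0: "admissible (G0 :: ('a \<times> 'a) set)"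
  shows "\<exists>\<sigma>. field_endo \<sigma> \<and> (\<forall>(k, v) \<in> G0. \<sigma> k = v)"
proof -
  obtain M where M: "admissible M" "G0 \<subseteq> M"
    and M_max: "\<And>G. admissible G \<Longrightarrow> M \<subseteq> G \<Longrightarrow> G = M"
    using admissible_maximal_extension[OF G0] by blast
  have "Domain M = UNIV"
  proof (rule ccontr)
    assume "Domain M \<noteq> UNIV"
    then obtain x where x: "x \<notin> Domain M" by blast
    obtain G where "admissible G" "M \<subseteq> G" "x \<in> Domain G"
      using admissible_enlarge[OF M(1)] by blast
    then show False using M_max x by blast
  qed
  then have "field_endo (graph_fun M)"
    using M(1) unfolding admissible_def field_hom_on_def field_endo_def by simp
  moreover have "graph_fun M k = v" if "(k, v) \<in> G0" for k v
    using graph_fun_eq[of M k v] M that unfolding admissible_def by blast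
  ultimately show ?thesis by (intro exI[of _ "graph_fun M"]) auto
qed

end

section \<open>Elements fixed by all endomorphisms\<close>

lemma root_of_linear_poly_over:
  assumes K: "is_subfield K" and p: "poly_over K p" "degree p = 1" "poly p x = 0"
  shows "x \<in> K"
proof -
  have "p \<noteq> 0" using p(2) by auto
  then have "coeff p 1 \<noteq> 0" using p(2) leading_coeff_0_iff[of p] by simp
  moreover have "coeff p 0 + coeff p 1 * x = 0" using p(2,3) by (simp add: poly_altdef)
  ultimately have "x = - coeff p 0 / coeff p 1"
    by (simp add: eq_divide_eq add_eq_0_iff2 mult.commute)
  then show ?thesis using K p(1) unfolding poly_over_def by (simp add: is_subfield_closed)
qed

lemma minimal_poly_pderiv_nonzero:
  fixes x :: "'a::field_char_0"
  assumes K: "is_subfield K" and p: "is_minimal_poly K x p"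
  shows "poly (pderiv p) x \<noteq> 0"
proof
  assume "poly (pderiv p) x = 0"
  moreover have "pderiv p \<noteq> 0" using is_minimal_poly_degree[OF p] by (simp add: pderiv_eq_0_iff)
  moreover have "poly_over K (pderiv p)"
    using p K poly_over_pderiv unfolding is_minimal_poly_def by blast
  ultimately have "degree p \<le> degree (pderiv p)" using p unfolding is_minimal_poly_def by blast
  then show False using degree_pderiv[of p] is_minimal_poly_degree[OF p] by simp
qed

lemma tilde_set_subset_hat_set: "(tilde_set :: 'a::field set) \<subseteq> hat_set"
proof
  fix r :: 'a assume "r \<in> tilde_set"
  then obtain A where A: "adequate r A" unfolding tilde_set_def by blast
  have "\<sigma> r = r" if "field_endo \<sigma>" for \<sigma>
  proof -
    have "respects_on A \<sigma>" using that unfolding respects_on_def field_endo_def by auto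
    then show ?thesis using A unfolding adequate_def by blast
  qed
  then show "r \<in> hat_set" unfolding hat_set_def by blast
qed

lemma respects_on_of_int:
  fixes f :: "'a::field \<Rightarrow> 'a"
  assumes f: "respects_on A f" and A: "of_int ` {-N..N} \<subseteq> A" and N: "1 \<le> N" and i: "\<bar>i\<bar> \<le> N"
  shows "f (of_int i) = of_int i"
proof -
  have in_A: "of_int j \<in> A" if "\<bar>j\<bar> \<le> N" for j
    by (rule subsetD[OF A imageI]) (use that in auto)
  have add: "f (a + b) = f a + f b" if "a \<in> A" "b \<in> A" "a + b \<in> A" for a b
    using f that unfolding respects_on_def by blast
  have f1: "f 1 = 1" using f in_A[of 1] N unfolding respects_on_def by simp
  have "f 0 = f 0 + f 0" using add[of 0 0] in_A[of 0] N by simp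
  then have f0: "f 0 = 0" by (metis add_cancel_right_right)
  have nonneg: "f (of_nat n) = of_nat n" if "int n \<le> N" for n
    using that
  proof (induction n)
    case (Suc n)
    have "f (of_nat n + 1) = f (of_nat n) + f 1"
      using add in_A[of "int n"] in_A[of "int n + 1"] in_A[of 1] N Suc.prems by simp
    then show ?case using Suc f1 by (simp add: add.commute)
  qed (simp add: f0)
  show ?thesis
  proof (cases "0 \<le> i")
    case True
    then show ?thesis using nonneg[of "nat i"] i by simp
  next
    case False
    have "f (of_int i + of_int (- i)) = f (of_int i) + f (of_int (- i))"
      by (rule add) (use in_A[of i] in_A[of "- i"] in_A[of 0] i in auto)
    moreover have "f (of_int (- i)) = of_int (- i)" using nonneg[of "nat (- i)"] i False by simp
    ultimately show ?thesis using f0 by simp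
  qed
qed

lemma Rats_subset_tilde_set: "\<rat> \<subseteq> (tilde_set :: 'a::field_char_0 set)"
proof
  fix r :: 'a assume "r \<in> \<rat>"
  then obtain a b where ab: "0 < b" "r = of_int a / of_int b" by (metis Rats_cases')
  define N where "N = \<bar>a\<bar> + b"
  define A where "A = insert r (of_int ` {-N..N})"
  have "adequate r A" unfolding adequate_def
  proof (intro conjI allI impI)
    show "finite A" "r \<in> A" unfolding A_def by simp_all
  next
    fix f assume f: "respects_on A f"
    have fix_int: "f (of_int i) = of_int i" if "\<bar>i\<bar> \<le> N" for i
      by (rule respects_on_of_int[OF f _ _ that]) (use ab(1) in \<open>auto simp: A_def N_def\<close>)
    have rb: "r * of_int b = of_int a" using ab by simp
    have "r \<in> A" "of_int a \<in> A" "of_int b \<in> A"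
      unfolding A_def N_def using ab(1) by (auto intro!: insertI2 imageI)
    then have "f (r * of_int b) = f r * f (of_int b)"
      using f rb unfolding respects_on_def by metis
    then have "f r * of_int b = r * of_int b"
      using \<open>r * of_int b = of_int a\<close> fix_int[of a] fix_int[of b] ab(1) by (simp add: N_def)
    then show "f r = r" using ab(1) by simp
  qed
  then show "r \<in> tilde_set" unfolding tilde_set_def by blast
qed

context
  assumes roots: "\<And>p :: 'a::field_char_0 poly. degree p \<noteq> 0 \<Longrightarrow> \<exists>z. poly p z = 0"
begin

lemma minimal_poly_other_root:
  assumes K: "is_subfield K" and p: "is_minimal_poly K x p" and x: "x \<notin> K"
  shows "\<exists>y. y \<noteq> x \<and> poly p (y :: 'a) = 0"
proof (rule ccontr)
  assume "\<nexists>y. y \<noteq> x \<and> poly p y = 0"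
  then have only_x: "y = x" if "poly p y = 0" for y using that by blast
  have "[:- x, 1:] dvd p" using p by (simp add: poly_eq_0_iff_dvd is_minimal_poly_def)
  then obtain r where r: "p = [:- x, 1:] * r" by (rule dvdE)
  have "r \<noteq> 0" using r p unfolding is_minimal_poly_def by auto
  have "degree p \<noteq> 1"
    using root_of_linear_poly_over[OF K] p x unfolding is_minimal_poly_def by blast
  moreover have "degree ([:- x, 1:] * r) = 1 + degree r"
    by (subst degree_mult_eq) (use \<open>r \<noteq> 0\<close> in auto)
  ultimately have "degree r \<noteq> 0" by (simp only: r)
  then obtain w where "poly r w = 0" using roots by blast
  then have "poly r x = 0" using only_x[of w] r by simp
  moreover have "pderiv p = [:- x, 1:] * pderiv r + r * pderiv [:- x, 1:]"
    unfolding r by (rule pderiv_mult)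
  ultimately have "poly (pderiv p) x = 0" by (simp add: pderiv_pCons)
  then show False using minimal_poly_pderiv_nonzero[OF K p] by contradiction
qed

lemma exists_other_conjugate_over_Rats:
  assumes z: "(z :: 'a) \<notin> \<rat>"
  shows "\<exists>y. y \<noteq> z \<and> conjugate_over \<rat> id z y \<and> algebraic_over (adjoin \<rat> z) y"
proof (cases "algebraic_over \<rat> z")
  case True
  then obtain p where p: "is_minimal_poly \<rat> z p" using minimal_poly_exists by blast
  then obtain y where "y \<noteq> z" "poly p y = 0"
    using minimal_poly_other_root[OF is_subfield_Rats p z] by blast
  moreover have "conjugate_over \<rat> id z y"
    using conjugate_over_minimal_poly_root[OF is_subfield_Rats _ p, of id] \<open>poly p y = 0\<close>
    by (simp add: field_hom_on_def)
  moreover have "algebraic_over (adjoin \<rat> z) y"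
    using p \<open>poly p y = 0\<close> algebraic_over_mono[OF subset_adjoin[OF is_subfield_Rats]]
    unfolding is_minimal_poly_def algebraic_over_def by blast
  ultimately show ?thesis by blast
next
  case False
  have "\<not> algebraic_over \<rat> (z + 1)"
  proof
    assume "algebraic_over \<rat> (z + 1)"
    then have "z + 1 - 1 \<in> {w. algebraic_over \<rat> w}"
      by (intro is_subfield_diff[OF is_subfield_algebraic_closure[OF is_subfield_Rats]])
        (simp_all add: algebraic_over_self[OF is_subfield_Rats])
    then show False using False by simp
  qed
  then have "conjugate_over \<rat> id z (z + 1)"
    using False unfolding conjugate_over_def algebraic_over_def by auto
  moreover have "algebraic_over (adjoin \<rat> z) (z + 1)"
    using is_subfield_adjoin[OF is_subfield_Rats, of z] adjoin_self[OF is_subfield_Rats, of z]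
    by (simp add: algebraic_over_self is_subfield_closed)
  ultimately show ?thesis by (intro exI[of _ "z + 1"]) simp
qed

lemma exists_endo_moving:
  assumes z: "(z :: 'a) \<notin> \<rat>"
  shows "\<exists>\<sigma>. field_endo \<sigma> \<and> \<sigma> z \<noteq> z"
proof -
  obtain y where y: "y \<noteq> z" "conjugate_over \<rat> id z y" "algebraic_over (adjoin \<rat> z) y"
    using exists_other_conjugate_over_Rats[OF z] by blast
  have "graph_fun (graph_on \<rat> id) k = id k" if "k \<in> \<rat>" for k
    using graph_fun_graph_on[OF that] .
  then have "conjugate_over (Domain (graph_on \<rat> id)) (graph_fun (graph_on \<rat> id)) z y"
    unfolding Domain_graph_on using y(2) by (rule iffD2[OF conjugate_over_cong])
  moreover have "admissible (graph_on \<rat> (id :: 'a \<Rightarrow> 'a))"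
    by (rule admissible_graph_on[OF is_subfield_Rats])
      (simp_all add: field_hom_on_def algebraic_over_self[OF is_subfield_Rats])
  moreover have "algebraic_over (adjoin (Domain (graph_on \<rat> id)) z) y"
    using y(3) by (simp add: Domain_graph_on)
  ultimately obtain G where G: "admissible G" "(z, y) \<in> G"
    using admissible_extend by blast
  obtain \<sigma> where \<sigma>: "field_endo \<sigma>" "\<forall>(k, v) \<in> G. \<sigma> k = v"
    using admissible_extends_to_endo[OF roots G(1)] by blast
  then have "\<sigma> z \<noteq> z" using G(2) y(1) by auto
  then show ?thesis using \<sigma>(1) by blast
qed

lemma hat_set_subset_Rats: "(hat_set :: 'a set) \<subseteq> \<rat>"
  unfolding hat_set_def using exists_endo_moving by blast

end

theorem corollary2:
  shows "(tilde_set :: complex set) = hat_set \<and> (hat_set :: complex set) = \<rat>"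
proof -
  have "\<exists>z. poly p z = 0" if "degree p \<noteq> 0" for p :: "complex poly"
    using fundamental_theorem_of_algebra[of p] that by (simp add: constant_degree)
  then show ?thesis
    using Rats_subset_tilde_set tilde_set_subset_hat_set hat_set_subset_Rats by blast
qed

end
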